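(* Let $\mathcal{H}=(V,E)$ be a finite hypergraph in which every hyperedge has size at least $2$. Let $\mathcal{H}^{[1]}$ denote its $1$-intersection graph. If $\chi(\mathcal{H}^{[1]})=2$, then $\chi(\mathcal{H})=2$.
   Context: A hypergraph $\mathcal{H}=(V,E)$ consists of a finite vertex set $V$ and a collection $E$ of subsets of $V$ (hyperedges). A vertex coloring of $\mathcal{H}$ is proper if no hyperedge is monochromatic; $\chi(\mathcal{H})$ is the least number of colors in a proper vertex coloring of $\mathcal{H}$ (which exists since all hyperedges have size at least $2$). The $1$-intersection graph $\mathcal{H}^{[1]}$ of $\mathcal{H}$ is the graph whose vertex set is $E(\mathcal{H})$, in which two distinct hyperedges $e,f$ are adjacent if and only if $|e\cap f|=1$. $\chi(\mathcal{H}^{[1]})$ is the usual chromatic number of this graph. *)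

theory Defs
  imports Main
begin

definition hypergraph :: "'a set \<Rightarrow> 'a set set \<Rightarrow> bool" where
  "hypergraph V E \<longleftrightarrow> finite V \<and> (\<forall>e\<in>E. e \<subseteq> V \<and> card e \<ge> 2)"

definition proper_hcol :: "'a set \<Rightarrow> 'a set set \<Rightarrow> nat \<Rightarrow> ('a \<Rightarrow> nat) \<Rightarrow> bool" where
  "proper_hcol V E k c \<longleftrightarrow> (\<forall>v\<in>V. c v < k) \<and>
     (\<forall>e\<in>E. \<not> (\<exists>i. \<forall>v\<in>e. c v = i))"

definition hchromatic :: "'a set \<Rightarrow> 'a set set \<Rightarrow> nat" where
  "hchromatic V E = (LEAST k. \<exists>c. proper_hcol V E k c)"

definition one_int_adj :: "'a set \<Rightarrow> 'a set \<Rightarrow> bool" where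
  "one_int_adj e f \<longleftrightarrow> e \<noteq> f \<and> card (e \<inter> f) = 1"

definition proper_icol :: "'a set set \<Rightarrow> nat \<Rightarrow> ('a set \<Rightarrow> nat) \<Rightarrow> bool" where
  "proper_icol E k c \<longleftrightarrow> (\<forall>e\<in>E. c e < k) \<and>
     (\<forall>e\<in>E. \<forall>f\<in>E. one_int_adj e f \<longrightarrow> c e \<noteq> c f)"

definition ichromatic :: "'a set set \<Rightarrow> nat" where
  "ichromatic E = (LEAST k. \<exists>c. proper_icol E k c)"

end

theory Submission
  imports Defs
begin

text \<open>
  Read a proper 2-colouring \<open>s\<close> of the 1-intersection graph as a Boolean label on the edges,
  and add the edges one at a time to a proper Boolean vertex colouring. If the new edge is
  monochromatic, swap the labels if necessary so that every monochromatic edge \<open>g\<close> has colour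
  \<open>s g\<close>. Then repeatedly flip a minimal transversal \<open>W\<close> of the not yet flipped parts of the
  monochromatic edges. By minimality each \<open>u \<in> W\<close> lies on a monochromatic edge \<open>m\<close> whose
  unflipped part meets \<open>W\<close> only in \<open>u\<close>. An edge \<open>g\<close> that is monochromatic after the flip meets
  \<open>W\<close>, say in \<open>u\<close>, and then \<open>g \<inter> m = {u}\<close>; so \<open>s g \<noteq> s m\<close>, and \<open>g\<close> has colour
  \<open>\<not> s m = s g\<close>. No vertex is flipped twice: an edge consisting of flipped vertices only would
  have been monochromatic in the wrong colour before the process. Hence the process stops, and
  then no edge is monochromatic.
\<close>

definition monochromatic :: "('a \<Rightarrow> 'c) \<Rightarrow> 'a set \<Rightarrow> bool" where
  "monochromatic c g \<longleftrightarrow> (\<exists>i. \<forall>x\<in>g. c x = i)"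

definition monochromatic_as_labelled ::
    "'a set set \<Rightarrow> ('a set \<Rightarrow> bool) \<Rightarrow> ('a \<Rightarrow> bool) \<Rightarrow> bool" where
  "monochromatic_as_labelled F s c \<longleftrightarrow> (\<forall>g\<in>F. monochromatic c g \<longrightarrow> (\<forall>x\<in>g. c x = s g))"

definition flip :: "'a set \<Rightarrow> ('a \<Rightarrow> bool) \<Rightarrow> 'a \<Rightarrow> bool" where
  "flip W c x = (if x \<in> W then \<not> c x else c x)"

lemma flip_empty [simp]: "flip {} c = c"
  by (simp add: flip_def fun_eq_iff)

lemma flip_flip_disjoint: "W \<inter> Q = {} \<Longrightarrow> flip W (flip Q c) = flip (Q \<union> W) c"
  by (auto simp: flip_def fun_eq_iff)

lemma monochromatic_flip_subset:
  assumes "monochromatic (flip Q c) g" and "g \<subseteq> Q"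
  shows "monochromatic c g"
proof -
  obtain b where "\<forall>x\<in>g. flip Q c x = b"
    using assms(1) unfolding monochromatic_def by blast
  then have "\<forall>x\<in>g. c x = (\<not> b)"
    using assms(2) unfolding flip_def by (metis (full_types) subsetD)
  then show ?thesis
    unfolding monochromatic_def by blast
qed

lemma transversal_with_private_elements:
  assumes "finite (\<Union>A)" and "{} \<notin> A"
  shows "\<exists>W\<subseteq>\<Union>A. (\<forall>a\<in>A. a \<inter> W \<noteq> {}) \<and> (\<forall>u\<in>W. \<exists>a\<in>A. a \<inter> W = {u})"
proof -
  let ?transversal = "\<lambda>W. W \<subseteq> \<Union>A \<and> (\<forall>a\<in>A. a \<inter> W \<noteq> {})"
  have "?transversal (\<Union>A)"
    using assms(2) by (auto simp: Int_absorb2 Union_upper)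
  from ex_has_least_nat[of ?transversal "\<Union>A" card, OF this]
  obtain W where W: "?transversal W" and least: "\<forall>W'. ?transversal W' \<longrightarrow> card W \<le> card W'"
    by blast
  have "\<exists>a\<in>A. a \<inter> W = {u}" if u: "u \<in> W" for u
  proof (rule ccontr)
    assume no_private: "\<not> ?thesis"
    have "a \<inter> (W - {u}) \<noteq> {}" if "a \<in> A" for a
    proof -
      have "a \<inter> W \<noteq> {}" and "a \<inter> W \<noteq> {u}"
        using W no_private that by auto
      then show ?thesis
        by blast
    qed
    then have "?transversal (W - {u})"
      using W by blast
    then have "card W \<le> card (W - {u})"
      using least by blast
    moreover have "finite W"
      using W assms(1) finite_subset by blast
    then have "card (W - {u}) < card W"
      using u by (rule card_Diff1_less)
    ultimately show False
      by simp
  qed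
  with W show ?thesis
    by blast
qed

lemma monochromatic_as_labelled_flip:
  assumes two_le_card: "\<forall>g\<in>F. 2 \<le> card g"
    and s: "\<forall>g\<in>F. \<forall>m\<in>F. one_int_adj g m \<longrightarrow> s g \<noteq> s m"
    and c: "monochromatic_as_labelled F s c"
    and hits: "\<forall>g\<in>F. monochromatic c g \<longrightarrow> g \<inter> W \<noteq> {}"
    and private_vertex: "\<forall>u\<in>W. \<exists>m\<in>F. monochromatic c m \<and> m \<inter> W = {u}"
  shows "monochromatic_as_labelled F s (flip W c)"
  unfolding monochromatic_as_labelled_def
proof (intro ballI impI)
  fix g x
  assume g: "g \<in> F" and "monochromatic (flip W c) g" and x: "x \<in> g"
  then obtain b where b: "\<And>y. y \<in> g \<Longrightarrow> flip W c y = b"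
    unfolding monochromatic_def by blast
  have "g \<inter> W \<noteq> {}"
  proof
    assume "g \<inter> W = {}"
    then have "monochromatic c g"
      using b unfolding monochromatic_def flip_def by (metis disjoint_iff)
    then show False
      using hits g \<open>g \<inter> W = {}\<close> by blast
  qed
  then obtain u where ug: "u \<in> g" and uW: "u \<in> W"
    by blast
  then obtain m where m: "m \<in> F" "monochromatic c m" and mW: "m \<inter> W = {u}"
    using private_vertex by blast
  have cm: "\<And>y. y \<in> m \<Longrightarrow> c y = s m"
    using c m unfolding monochromatic_as_labelled_def by blast
  have "b = (\<not> s m)"
    using b[OF ug] cm[of u] mW uW by (auto simp: flip_def)
  have "g \<inter> m = {u}"
  proof (intro equalityI subsetI)
    fix y
    assume y: "y \<in> g \<inter> m"
    have "y \<in> W"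
      using b[of y] cm[of y] y \<open>b = (\<not> s m)\<close> by (auto simp: flip_def split: if_splits)
    then show "y \<in> {u}"
      using y mW by blast
  qed (use ug mW in blast)
  moreover have "g \<noteq> m"
  proof
    assume "g = m"
    then have "card m = 1"
      using \<open>g \<inter> m = {u}\<close> by simp
    with two_le_card m(1) show False
      by fastforce
  qed
  ultimately have "s g \<noteq> s m"
    using s g m(1) unfolding one_int_adj_def by simp
  then show "flip W c x = s g"
    using b[OF x] \<open>b = (\<not> s m)\<close> by simp
qed

lemma flipped_monochromatic_edge_not_within:
  assumes c0: "monochromatic_as_labelled F s c0"
    and c: "monochromatic_as_labelled F s (flip Q c0)"
    and g: "g \<in> F" "g \<noteq> {}" "monochromatic (flip Q c0) g"
  shows "\<not> g \<subseteq> Q"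
proof
  assume "g \<subseteq> Q"
  with g(3) have "monochromatic c0 g"
    by (rule monochromatic_flip_subset)
  obtain x where "x \<in> g"
    using g(2) by blast
  have "c0 x = s g"
    using c0 g(1) \<open>monochromatic c0 g\<close> \<open>x \<in> g\<close> unfolding monochromatic_as_labelled_def by blast
  moreover have "flip Q c0 x = s g"
    using c g(1,3) \<open>x \<in> g\<close> unfolding monochromatic_as_labelled_def by blast
  moreover have "flip Q c0 x = (\<not> c0 x)"
    using \<open>g \<subseteq> Q\<close> \<open>x \<in> g\<close> unfolding flip_def by auto
  ultimately show False
    by simp
qed

lemma monochromatic_as_labelled_flip_step:
  assumes fin: "finite (\<Union>F)"
    and two_le_card: "\<forall>g\<in>F. 2 \<le> card g"
    and s: "\<forall>g\<in>F. \<forall>m\<in>F. one_int_adj g m \<longrightarrow> s g \<noteq> s m"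
    and c0: "monochromatic_as_labelled F s c0"
    and c: "monochromatic_as_labelled F s (flip Q c0)"
    and mono_edge: "g \<in> F" "monochromatic (flip Q c0) g"
  shows "\<exists>W. W \<noteq> {} \<and> W \<subseteq> \<Union>F - Q \<and> monochromatic_as_labelled F s (flip (Q \<union> W) c0)"
proof -
  let ?c = "flip Q c0"
  define M where "M = {g\<in>F. monochromatic ?c g}"
  define A where "A = (\<lambda>g. g - Q) ` M"
  have "g - Q \<noteq> {}" if "g \<in> M" for g
  proof -
    have "g \<in> F" and "monochromatic ?c g"
      using that unfolding M_def by auto
    moreover have "g \<noteq> {}"
      using two_le_card \<open>g \<in> F\<close> by force
    ultimately have "\<not> g \<subseteq> Q"
      using flipped_monochromatic_edge_not_within[OF c0 c] by blast
    then show ?thesis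
      by blast
  qed
  then have "{} \<notin> A"
    unfolding A_def by auto
  moreover have "\<Union>A \<subseteq> \<Union>F - Q"
    unfolding A_def M_def by blast
  moreover have "finite (\<Union>A)"
    using fin \<open>\<Union>A \<subseteq> \<Union>F - Q\<close> by (meson finite_Diff finite_subset)
  ultimately obtain W where WF: "W \<subseteq> \<Union>F - Q" and hits: "\<forall>a\<in>A. a \<inter> W \<noteq> {}"
    and private_vertex: "\<forall>u\<in>W. \<exists>a\<in>A. a \<inter> W = {u}"
    using transversal_with_private_elements by (metis order_trans)
  then have drop_Q: "(g - Q) \<inter> W = g \<inter> W" for g
    by blast
  have "monochromatic_as_labelled F s (flip W ?c)"
  proof (rule monochromatic_as_labelled_flip[OF two_le_card s c])
    show "\<forall>g\<in>F. monochromatic ?c g \<longrightarrow> g \<inter> W \<noteq> {}"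
      using hits drop_Q unfolding A_def M_def by auto
    show "\<forall>u\<in>W. \<exists>m\<in>F. monochromatic ?c m \<and> m \<inter> W = {u}"
      using private_vertex drop_Q unfolding A_def M_def by auto
  qed
  moreover have "W \<inter> Q = {}"
    using WF by blast
  ultimately have "monochromatic_as_labelled F s (flip (Q \<union> W) c0)"
    by (simp add: flip_flip_disjoint)
  moreover have "(g - Q) \<inter> W \<noteq> {}"
    using hits mono_edge unfolding A_def M_def by blast
  then have "W \<noteq> {}"
    by blast
  ultimately show ?thesis
    using WF by blast
qed

lemma proper_colouring_by_flipping:
  assumes fin: "finite (\<Union>F)"
    and two_le_card: "\<forall>g\<in>F. 2 \<le> card g"
    and s: "\<forall>g\<in>F. \<forall>m\<in>F. one_int_adj g m \<longrightarrow> s g \<noteq> s m"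
    and c0: "monochromatic_as_labelled F s c0"
  shows "\<exists>c :: 'a \<Rightarrow> bool. \<forall>g\<in>F. \<not> monochromatic c g"
proof -
  have "\<exists>c :: 'a \<Rightarrow> bool. \<forall>g\<in>F. \<not> monochromatic c g"
    if "monochromatic_as_labelled F s (flip Q c0)" for Q
    using that
  proof (induction "card (\<Union>F - Q)" arbitrary: Q rule: less_induct)
    case less
    show ?case
    proof (cases "\<exists>g\<in>F. monochromatic (flip Q c0) g")
      case False
      then show ?thesis
        by blast
    next
      case True
      then obtain g where "g \<in> F" "monochromatic (flip Q c0) g"
        by blast
      from monochromatic_as_labelled_flip_step[OF fin two_le_card s c0 less.prems this]
      obtain W where "W \<noteq> {}" and WF: "W \<subseteq> \<Union>F - Q"
        and flipped: "monochromatic_as_labelled F s (flip (Q \<union> W) c0)"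
        by blast
      then obtain w where "w \<in> W"
        by blast
      then have "\<Union>F - (Q \<union> W) \<subset> \<Union>F - Q"
        using WF by blast
      then have "card (\<Union>F - (Q \<union> W)) < card (\<Union>F - Q)"
        using fin by (meson finite_Diff psubset_card_mono)
      from less.hyps[OF this flipped] show ?thesis .
    qed
  qed
  from this[of "{}"] c0 show ?thesis
    by simp
qed

lemma two_colourable_if_one_intersection_bipartite:
  fixes s :: "'a set \<Rightarrow> bool"
  assumes fin: "finite (\<Union>E)"
    and two_le_card: "\<forall>g\<in>E. 2 \<le> card g"
    and s: "\<forall>g\<in>E. \<forall>m\<in>E. one_int_adj g m \<longrightarrow> s g \<noteq> s m"
  shows "\<exists>c :: 'a \<Rightarrow> bool. \<forall>g\<in>E. \<not> monochromatic c g"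
proof -
  have "\<exists>c :: 'a \<Rightarrow> bool. \<forall>g\<in>F. \<not> monochromatic c g" if "finite F" "F \<subseteq> E" for F
    using that
  proof (induction F rule: finite_induct)
    case empty
    show ?case
      by blast
  next
    case (insert e F)
    then obtain c :: "'a \<Rightarrow> bool" where c: "\<forall>g\<in>F. \<not> monochromatic c g"
      by blast
    show ?case
    proof (cases "monochromatic c e")
      case False
      with c show ?thesis
        by blast
    next
      case True
      then obtain b where b: "\<forall>x\<in>e. c x = b"
        unfolding monochromatic_def by blast
      define s' where "s' g = (if s g = s e then b else \<not> b)" for g
      have "finite (\<Union>(insert e F))"
        using Union_mono[OF insert.prems] fin by (rule finite_subset)
      moreover have "\<forall>g\<in>insert e F. 2 \<le> card g"
        using two_le_card insert.prems by blast
      moreover have "\<forall>g\<in>insert e F. \<forall>m\<in>insert e F. one_int_adj g m \<longrightarrow> s' g \<noteq> s' m"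
      proof (intro ballI impI)
        fix g m
        assume "g \<in> insert e F" "m \<in> insert e F" "one_int_adj g m"
        then have "s g \<noteq> s m"
          using s insert.prems by blast
        then show "s' g \<noteq> s' m"
          unfolding s'_def by argo
      qed
      moreover have "monochromatic_as_labelled (insert e F) s' c"
        using c b unfolding monochromatic_as_labelled_def s'_def by auto
      ultimately show ?thesis
        by (rule proper_colouring_by_flipping)
    qed
  qed
  moreover have "finite E"
    using fin by (rule finite_UnionD)
  ultimately show ?thesis
    by blast
qed

lemma ichromatic_empty: "ichromatic {} = 0"
  unfolding ichromatic_def proper_icol_def by simp

lemma ichromatic_attained:
  assumes "finite E"
  shows "\<exists>c. proper_icol E (ichromatic E) c"
proof -
  obtain f and n :: nat where "f ` E = {i. i < n}" and "inj_on f E"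
    using finite_imp_inj_to_nat_seg[OF assms] by blast
  then have "proper_icol E n f"
    unfolding proper_icol_def one_int_adj_def by (auto simp: inj_on_def)
  then have "\<exists>k c. proper_icol E k c"
    by blast
  then show ?thesis
    unfolding ichromatic_def by (rule LeastI_ex)
qed

lemma monochromatic_inj_comp:
  assumes "inj f"
  shows "monochromatic (\<lambda>x. f (c x)) g \<longleftrightarrow> monochromatic c g"
proof
  assume "monochromatic (\<lambda>x. f (c x)) g"
  then obtain i where i: "\<forall>x\<in>g. f (c x) = i"
    unfolding monochromatic_def by blast
  have "c x = inv f i" if "x \<in> g" for x
    using i that inv_f_f[OF assms, of "c x"] by simp
  then show "monochromatic c g"
    unfolding monochromatic_def by blast
next
  assume "monochromatic c g"
  then obtain i where "\<forall>x\<in>g. c x = i"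
    unfolding monochromatic_def by blast
  then have "\<forall>x\<in>g. f (c x) = f i"
    by simp
  then show "monochromatic (\<lambda>x. f (c x)) g"
    unfolding monochromatic_def by blast
qed

lemma proper_hcol_iff:
  "proper_hcol V E k c \<longleftrightarrow> (\<forall>v\<in>V. c v < k) \<and> (\<forall>e\<in>E. \<not> monochromatic c e)"
  by (simp add: proper_hcol_def monochromatic_def)

lemma two_le_if_proper_hcol:
  assumes "proper_hcol V E k c" and "e \<in> E" and "e \<subseteq> V"
  shows "2 \<le> k"
proof (rule ccontr)
  assume "\<not> 2 \<le> k"
  have "c v = 0" if "v \<in> e" for v
  proof -
    have "c v < k"
      using assms(1,3) that unfolding proper_hcol_iff by blast
    with \<open>\<not> 2 \<le> k\<close> show ?thesis
      by linarith
  qed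
  then have "monochromatic c e"
    unfolding monochromatic_def by blast
  with assms(1,2) show False
    unfolding proper_hcol_iff by blast
qed

lemma hchromatic_eq_2I:
  fixes c :: "'a \<Rightarrow> bool"
  assumes "\<forall>e\<in>E. e \<subseteq> V" and "E \<noteq> {}" and "\<forall>e\<in>E. \<not> monochromatic c e"
  shows "hchromatic V E = 2"
  unfolding hchromatic_def
proof (rule Least_equality)
  have "inj (of_bool :: bool \<Rightarrow> nat)"
    by (simp add: inj_def)
  then have "proper_hcol V E 2 (\<lambda>x. of_bool (c x))"
    using assms(3) unfolding proper_hcol_iff by (simp add: monochromatic_inj_comp)
  then show "\<exists>c. proper_hcol V E 2 c"
    by blast
  obtain e where "e \<in> E"
    using assms(2) by blast
  show "2 \<le> k" if "\<exists>c. proper_hcol V E k c" for k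
    using that two_le_if_proper_hcol \<open>e \<in> E\<close> assms(1) by blast
qed

lemma proper_icol_2_zero_labelling:
  assumes "proper_icol E 2 c"
  shows "\<forall>g\<in>E. \<forall>m\<in>E. one_int_adj g m \<longrightarrow> (c g = 0) \<noteq> (c m = 0)"
proof (intro ballI impI)
  fix g m
  assume "g \<in> E" "m \<in> E" "one_int_adj g m"
  then have "c g < 2" "c m < 2" "c g \<noteq> c m"
    using assms unfolding proper_icol_def by auto
  then show "(c g = 0) \<noteq> (c m = 0)"
    by linarith
qed

theorem theorem1p3:
  fixes V :: "'a set" and E :: "'a set set"
  assumes "hypergraph V E"
    and "ichromatic E = 2"
  shows "hchromatic V E = 2"
proof -
  have "finite V" and edges: "\<forall>e\<in>E. e \<subseteq> V" and two_le_card: "\<forall>e\<in>E. 2 \<le> card e"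
    using assms(1) unfolding hypergraph_def by auto
  have "\<Union>E \<subseteq> V"
    using edges by blast
  then have "finite (\<Union>E)"
    using \<open>finite V\<close> by (rule finite_subset)
  then have "finite E"
    by (rule finite_UnionD)
  then obtain ci where ci: "proper_icol E 2 ci"
    using ichromatic_attained assms(2) by fastforce
  have "E \<noteq> {}"
    using assms(2) by (auto simp: ichromatic_empty)
  from two_colourable_if_one_intersection_bipartite
    [OF \<open>finite (\<Union>E)\<close> two_le_card proper_icol_2_zero_labelling[OF ci]]
  obtain c :: "'a \<Rightarrow> bool" where "\<forall>e\<in>E. \<not> monochromatic c e"
    by blast
  with edges \<open>E \<noteq> {}\<close> show ?thesis
    by (rule hchromatic_eq_2I)
qed

end
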